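(* Let $(E,\rho_\theta)$ be a $b_v(\theta)$ metric space whose function $\theta$ is bounded, let $S:E\to E$, $u_0\in E$, and let $\{u_n\}$ be defined by $u_{n+1}=Su_n$ (so $u_n=S^nu_0$), with $u_n\neq u_m$ for all distinct $n,m\in\mathbb{N}$. Assume there exist $c\in[0,1)$ and $k_1,k_2\in[0,\infty)$ such that $\rho_\theta(u_m,u_n)\le c\,\rho_\theta(u_{m-1},u_{n-1})+k_1c^m+k_2c^m$ for all $n,m\in\mathbb{N}$. Then $\{u_n\}$ is a Cauchy sequence in $(E,\rho_\theta)$.
   Context: Let $E$ be a nonempty set, $\theta:E\times E\to[1,\infty)$ a function and $v\in\mathbb{N}$. A map $\rho_\theta:E\times E\to[0,\infty)$ is a $b_v(\theta)$ metric (and $(E,\rho_\theta)$ a $b_v(\theta)$ metric space) if for all $u,w\in E$: $\rho_\theta(u,w)=0$ iff $u=w$; $\rho_\theta(u,w)=\rho_\theta(w,u)$; and for all $u,z_1,\dots,z_v,w\in E$ pairwise distinct, $\rho_\theta(u,w)\le\theta(u,w)[\rho_\theta(u,z_1)+\rho_\theta(z_1,z_2)+\dots+\rho_\theta(z_{v-1},z_v)+\rho_\theta(z_v,w)]$. A sequence $\{u_n\}$ is Cauchy if for every $\varepsilon>0$ there is $n_0\in\mathbb{N}$ with $\rho_\theta(u_n,u_{n+p})<\varepsilon$ for all $n\ge n_0$ and $p>0$. *)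

theory Defs
  imports Main "HOL-Analysis.Analysis"
begin

text \<open>A b_v(theta) metric on the carrier set E. The points u, z_1, ..., z_v, w are
  encoded as z 0 = u, z 1, ..., z v, z (v+1) = w, pairwise distinct.\<close>
definition bv_metric :: "'a set \<Rightarrow> ('a \<Rightarrow> 'a \<Rightarrow> real) \<Rightarrow> nat \<Rightarrow> ('a \<Rightarrow> 'a \<Rightarrow> real) \<Rightarrow> bool" where
  "bv_metric E \<theta> v \<rho> \<longleftrightarrow>
     E \<noteq> {} \<and> v \<ge> 1 \<and>
     (\<forall>x\<in>E. \<forall>y\<in>E. \<theta> x y \<ge> 1) \<and>
     (\<forall>x\<in>E. \<forall>y\<in>E. \<rho> x y \<ge> 0) \<and>
     (\<forall>x\<in>E. \<forall>y\<in>E. \<rho> x y = 0 \<longleftrightarrow> x = y) \<and>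
     (\<forall>x\<in>E. \<forall>y\<in>E. \<rho> x y = \<rho> y x) \<and>
     (\<forall>z :: nat \<Rightarrow> 'a. z ` {0..v+1} \<subseteq> E \<longrightarrow> inj_on z {0..v+1} \<longrightarrow>
        \<rho> (z 0) (z (v+1)) \<le> \<theta> (z 0) (z (v+1)) * (\<Sum>i\<in>{0..v}. \<rho> (z i) (z (Suc i))))"

definition bv_cauchy :: "('a \<Rightarrow> 'a \<Rightarrow> real) \<Rightarrow> (nat \<Rightarrow> 'a) \<Rightarrow> bool" where
  "bv_cauchy \<rho> u \<longleftrightarrow>
     (\<forall>\<epsilon>>0. \<exists>n0. \<forall>n\<ge>n0. \<forall>p>0. \<rho> (u n) (u (n + p)) < \<epsilon>)"

end

theory Submission
  imports Defs
begin

text \<open>Iterating the contraction condition n times gives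
  \<rho>(u n, u (n+p)) \<le> c^n \<rho>(u 0, u p) + n (k1 + k2) c^n, so it suffices that \<rho>(u 0, u p) is
  bounded in p. The b_v inequality along the distinct points u 0, ..., u (v-1), u q, u p,
  followed by q contraction steps for \<rho>(u q, u p), bounds \<rho>(u 0, u p) by a constant plus
  T c^q \<rho>(u 0, u (p-q)), where T bounds \<theta>. Choosing q with T c^q < 1 turns this into a contracting
  recurrence, whose solutions are bounded.\<close>

lemma contraction_iterate:
  fixes d :: "nat \<Rightarrow> nat \<Rightarrow> real" and c K :: real
  assumes c: "0 \<le> c"
    and step: "\<And>m n. 1 \<le> m \<Longrightarrow> 1 \<le> n \<Longrightarrow> d m n \<le> c * d (m - 1) (n - 1) + K * c ^ m"
    and "j \<le> m" "j \<le> n"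
  shows "d m n \<le> c ^ j * d (m - j) (n - j) + real j * K * c ^ m"
  using \<open>j \<le> m\<close> \<open>j \<le> n\<close>
proof (induction j)
  case 0
  then show ?case by simp
next
  case (Suc j)
  have "d (m - j) (n - j) \<le> c * d (m - Suc j) (n - Suc j) + K * c ^ (m - j)"
    using step[of "m - j" "n - j"] Suc.prems by simp
  then have "c ^ j * d (m - j) (n - j) \<le> c ^ j * (c * d (m - Suc j) (n - Suc j) + K * c ^ (m - j))"
    using c by (simp add: mult_left_mono)
  also have "\<dots> = c ^ Suc j * d (m - Suc j) (n - Suc j) + K * c ^ m"
  proof -
    have "c ^ j * c ^ (m - j) = c ^ m"
      using Suc.prems by (simp flip: power_add)
    then show ?thesis
      by (simp add: algebra_simps)
  qed
  finally show ?case
    using Suc by (simp add: algebra_simps)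
qed

lemma bounded_of_contracting_recurrence:
  fixes a :: "nat \<Rightarrow> real"
  assumes "0 < q" "0 \<le> r" "r < 1"
    and rec: "\<And>j. q < j \<Longrightarrow> a j \<le> A + r * a (j - q)"
  shows "\<exists>B. \<forall>j. a j \<le> B"
proof -
  define B where "B = max (Max (a ` {..q})) (A / (1 - r))"
  have "a j \<le> B" for j
  proof (induction j rule: less_induct)
    case (less j)
    show ?case
    proof (cases "j \<le> q")
      case True
      then show ?thesis
        unfolding B_def by (simp add: le_max_iff_disj)
    next
      case False
      then have "a (j - q) \<le> B"
        using less.IH[of "j - q"] \<open>0 < q\<close> by simp
      then have "a j \<le> A + r * B"
        using rec[of j] \<open>\<not> j \<le> q\<close> \<open>0 \<le> r\<close> mult_left_mono[of "a (j - q)" B r] by simp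
      also have "\<dots> \<le> B"
      proof -
        have "A / (1 - r) \<le> B"
          by (simp add: B_def)
        then have "A \<le> (1 - r) * B"
          using \<open>r < 1\<close> by (simp add: pos_divide_le_eq mult.commute)
        then show ?thesis
          by (simp add: algebra_simps)
      qed
      finally show ?thesis .
    qed
  qed
  then show ?thesis by blast
qed

lemma bv_metric_orbit_polygon:
  assumes metric: "bv_metric E \<theta> v \<rho>" and "range u \<subseteq> E" "inj u" "v \<le> q" "q < j"
  shows "\<rho> (u 0) (u j) \<le> \<theta> (u 0) (u j) *
    ((\<Sum>i<v - 1. \<rho> (u i) (u (Suc i))) + \<rho> (u (v - 1)) (u q) + \<rho> (u q) (u j))"
proof -
  obtain w where v: "v = Suc w"
    using metric by (cases v) (auto simp: bv_metric_def)
  define h where "h i = (if i < v then i else if i = v then q else j)" for i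
  have "strict_mono_on {0..v+1} h"
    using \<open>v \<le> q\<close> \<open>q < j\<close> by (auto simp: strict_mono_on_def h_def)
  then have "inj_on (u \<circ> h) {0..v+1}"
    using \<open>inj u\<close> by (simp add: comp_inj_on strict_mono_on_imp_inj_on inj_on_subset)
  moreover have "(u \<circ> h) ` {0..v+1} \<subseteq> E"
    using \<open>range u \<subseteq> E\<close> by auto
  moreover have "\<And>z. z ` {0..v+1} \<subseteq> E \<Longrightarrow> inj_on z {0..v+1} \<Longrightarrow>
      \<rho> (z 0) (z (v+1)) \<le> \<theta> (z 0) (z (v+1)) * (\<Sum>i\<in>{0..v}. \<rho> (z i) (z (Suc i)))"
    using metric unfolding bv_metric_def by blast
  ultimately have "\<rho> (u (h 0)) (u (h (v+1))) \<le>
      \<theta> (u (h 0)) (u (h (v+1))) * (\<Sum>i\<in>{0..v}. \<rho> (u (h i)) (u (h (Suc i))))"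
    by fastforce
  moreover have "h 0 = 0" "h (v+1) = j"
    by (simp_all add: h_def v)
  moreover have "(\<Sum>i\<in>{0..v}. \<rho> (u (h i)) (u (h (Suc i)))) =
      (\<Sum>i<w. \<rho> (u i) (u (Suc i))) + \<rho> (u w) (u q) + \<rho> (u q) (u j)"
  proof -
    have "(\<Sum>i<w. \<rho> (u (h i)) (u (h (Suc i)))) = (\<Sum>i<w. \<rho> (u i) (u (Suc i)))"
      by (rule sum.cong) (simp_all add: h_def v)
    moreover have "{0..v} = {..<Suc (Suc w)}"
      by (auto simp: v)
    ultimately show ?thesis
      by (simp add: h_def v)
  qed
  ultimately show ?thesis
    by (simp add: v)
qed

lemma bv_orbit_bounded:
  fixes c K :: real
  assumes metric: "bv_metric E \<theta> v \<rho>" and \<theta>_le: "\<forall>x\<in>E. \<forall>y\<in>E. \<theta> x y \<le> T"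
    and range: "range u \<subseteq> E" and "inj u" and c: "0 \<le> c" "c < 1"
    and contr: "\<And>m n. 1 \<le> m \<Longrightarrow> 1 \<le> n \<Longrightarrow>
      \<rho> (u m) (u n) \<le> c * \<rho> (u (m - 1)) (u (n - 1)) + K * c ^ m"
  shows "\<exists>B. \<forall>j. \<rho> (u 0) (u j) \<le> B"
proof -
  have uE: "u m \<in> E" for m
    using range by auto
  then have \<rho>_nonneg: "0 \<le> \<rho> (u m) (u n)" for m n
    using metric by (simp add: bv_metric_def)
  have "1 \<le> \<theta> (u 0) (u 0)" "\<theta> (u 0) (u 0) \<le> T"
    using metric uE \<theta>_le by (simp_all add: bv_metric_def)
  then have "1 \<le> T"
    by linarith
  obtain N where "c ^ N < 1 / T"
    using real_arch_pow_inv[of "1 / T" c] \<open>1 \<le> T\<close> c by auto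
  define q where "q = N + v"
  have "0 < q"
    using metric by (simp add: q_def bv_metric_def)
  have "T * c ^ q < 1"
  proof -
    have "T * c ^ q \<le> T * c ^ N"
      using c \<open>1 \<le> T\<close> by (simp add: q_def power_decreasing mult_left_mono)
    also have "\<dots> < 1"
      using \<open>c ^ N < 1 / T\<close> \<open>1 \<le> T\<close> by (simp add: field_simps)
    finally show ?thesis .
  qed
  define C where "C = (\<Sum>i<v - 1. \<rho> (u i) (u (Suc i))) + \<rho> (u (v - 1)) (u q)"
  have "\<rho> (u 0) (u j) \<le> T * (C + real q * K * c ^ q) + T * c ^ q * \<rho> (u 0) (u (j - q))"
    if "q < j" for j
  proof -
    have "\<rho> (u 0) (u j) \<le> \<theta> (u 0) (u j) * (C + \<rho> (u q) (u j))"
      using bv_metric_orbit_polygon[OF metric range \<open>inj u\<close>, of q j] \<open>q < j\<close>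
      by (simp add: C_def q_def)
    also have "\<dots> \<le> T * (C + \<rho> (u q) (u j))"
    proof (rule mult_right_mono)
      show "\<theta> (u 0) (u j) \<le> T"
        using \<theta>_le uE by simp
      show "0 \<le> C + \<rho> (u q) (u j)"
        using \<rho>_nonneg by (simp add: C_def sum_nonneg)
    qed
    also have "\<rho> (u q) (u j) \<le> c ^ q * \<rho> (u 0) (u (j - q)) + real q * K * c ^ q"
      using contraction_iterate[where d = "\<lambda>m n. \<rho> (u m) (u n)", OF c(1) contr, of q q j] \<open>q < j\<close>
      by simp
    finally show ?thesis
      using \<open>1 \<le> T\<close> by (simp add: algebra_simps)
  qed
  moreover have "0 \<le> T * c ^ q"
    using \<open>1 \<le> T\<close> c by simp
  ultimately show ?thesis
    using bounded_of_contracting_recurrence[where a = "\<lambda>j. \<rho> (u 0) (u j)"]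
      \<open>0 < q\<close> \<open>T * c ^ q < 1\<close> by blast
qed

lemma bv_cauchyI_tendsto:
  assumes "\<And>n p. 0 < p \<Longrightarrow> \<rho> (u n) (u (n + p)) \<le> f n" and "f \<longlonglongrightarrow> 0"
  shows "bv_cauchy \<rho> u"
  unfolding bv_cauchy_def
proof (intro allI impI)
  fix \<epsilon> :: real
  assume "0 < \<epsilon>"
  then obtain n0 where "\<forall>n\<ge>n0. f n < \<epsilon>"
    using order_tendstoD(2)[OF \<open>f \<longlonglongrightarrow> 0\<close>] by (auto simp: eventually_sequentially)
  then show "\<exists>n0. \<forall>n\<ge>n0. \<forall>p>0. \<rho> (u n) (u (n + p)) < \<epsilon>"
    using assms(1) by (meson le_less_trans)
qed

theorem mainTheorem8:
  fixes E :: "'a set" and \<theta> \<rho> :: "'a \<Rightarrow> 'a \<Rightarrow> real" and v :: nat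
    and S :: "'a \<Rightarrow> 'a" and u0 :: 'a and u :: "nat \<Rightarrow> 'a"
    and c k1 k2 :: real
  assumes metric: "bv_metric E \<theta> v \<rho>"
    and theta_bdd: "\<exists>K. \<forall>x\<in>E. \<forall>y\<in>E. \<theta> x y \<le> K"
    and S_maps: "\<forall>x\<in>E. S x \<in> E"
    and u0_in: "u0 \<in> E"
    and u_def: "\<forall>n. u n = (S ^^ n) u0"
    and u_distinct: "\<forall>n m. n \<noteq> m \<longrightarrow> u n \<noteq> u m"
    and c_range: "0 \<le> c" "c < 1"
    and k_nonneg: "0 \<le> k1" "0 \<le> k2"
    and contr: "\<forall>n m. 1 \<le> n \<longrightarrow> 1 \<le> m \<longrightarrow>
        \<rho> (u m) (u n) \<le> c * \<rho> (u (m - 1)) (u (n - 1)) + k1 * c ^ m + k2 * c ^ m"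
  shows "bv_cauchy \<rho> u"
proof -
  define K where "K = k1 + k2"
  have contr_K: "\<rho> (u m) (u n) \<le> c * \<rho> (u (m - 1)) (u (n - 1)) + K * c ^ m"
    if "1 \<le> m" "1 \<le> n" for m n
    using contr that by (simp add: K_def distrib_right add.assoc)
  have "u n \<in> E" for n
    by (induction n) (use u_def u0_in S_maps in auto)
  then have range: "range u \<subseteq> E"
    by auto
  have "inj u"
    using u_distinct by (meson injI)
  obtain T where "\<forall>x\<in>E. \<forall>y\<in>E. \<theta> x y \<le> T"
    using theta_bdd by blast
  then obtain B where B: "\<forall>j. \<rho> (u 0) (u j) \<le> B"
    using bv_orbit_bounded[OF metric _ range \<open>inj u\<close> c_range contr_K] by blast
  have "\<rho> (u n) (u (n + p)) \<le> c ^ n * B + K * (real n * c ^ n)" for n p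
  proof -
    have "\<rho> (u n) (u (n + p)) \<le> c ^ n * \<rho> (u 0) (u p) + real n * K * c ^ n"
      using contraction_iterate[where d = "\<lambda>m n. \<rho> (u m) (u n)", OF c_range(1) contr_K, of n n "n + p"]
      by simp
    also have "\<dots> \<le> c ^ n * B + K * (real n * c ^ n)"
      using B c_range by (simp add: mult_left_mono)
    finally show ?thesis .
  qed
  \<comment> \<open>n c^n \<longlonglongrightarrow> 0 whatever the sign of K.\<close>
  moreover have "(\<lambda>n. c ^ n * B + K * (real n * c ^ n)) \<longlonglongrightarrow> 0 * B + K * 0"
    using c_range by (intro tendsto_intros LIMSEQ_power_zero powser_times_n_limit_0) auto
  ultimately show ?thesis
    by (intro bv_cauchyI_tendsto) simp_all
qed

end
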